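(* Let $G=(V,E)$ be a finite simple undirected graph with $n=|V|$ and let $0<p<1$. Let $S_0=V$ and, for $i=1,\dots,n$, let $S_i=S_{i-1}\setminus\{\ell_i\}$ where $\ell_i\in S_{i-1}$ is any vertex with $d_{\ell_i}(S_{i-1})=\min_{u\in S_{i-1}}d_u(S_{i-1})$ (the standard peeling algorithm, ties broken arbitrarily). Let $S'$ be a set among $S_0,S_1,\dots,S_n$ maximizing $f_p$. Then $2\,f_p(S')\ge \max_{T\subseteq V}f_p(T)$, and equivalently $2^{1/p}M_p(S')\ge\max_{T\subseteq V}M_p(T)$.
   Context: For $v\in V$, $N(v)=\{u\in V:(u,v)\in E\}$ (so $v\notin N(v)$). For $S\subseteq V$ and $v\in V$, $d_v(S)=|N(v)\cap S|$. For $p>0$ and nonempty $S\subseteq V$, $f_p(S)=\frac{1}{|S|}\sum_{v\in S}d_v(S)^p$ (with the convention $0^p=0$), $f_p(\emptyset)=0$, and the $p$-density is $M_p(S)=f_p(S)^{1/p}$. *)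

theory Defs
  imports Complex_Main
begin

definition simple_graph :: "'a set \<Rightarrow> ('a \<Rightarrow> 'a \<Rightarrow> bool) \<Rightarrow> bool" where
  "simple_graph V E \<longleftrightarrow> finite V \<and> (\<forall>u v. E u v \<longrightarrow> E v u) \<and> (\<forall>v. \<not> E v v)
     \<and> (\<forall>u v. E u v \<longrightarrow> u \<in> V \<and> v \<in> V)"

definition nbhd :: "'a set \<Rightarrow> ('a \<Rightarrow> 'a \<Rightarrow> bool) \<Rightarrow> 'a \<Rightarrow> 'a set" where
  "nbhd V E v = {u \<in> V. E u v}"

definition deg_in :: "'a set \<Rightarrow> ('a \<Rightarrow> 'a \<Rightarrow> bool) \<Rightarrow> 'a \<Rightarrow> 'a set \<Rightarrow> nat" where
  "deg_in V E v S = card (nbhd V E v \<inter> S)"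

text \<open>f_p(S); note 0 powr p = 0 in Isabelle, matching the convention 0^p = 0,
  and division by card {} = 0 gives f_p({}) = 0.\<close>
definition fp :: "'a set \<Rightarrow> ('a \<Rightarrow> 'a \<Rightarrow> bool) \<Rightarrow> real \<Rightarrow> 'a set \<Rightarrow> real" where
  "fp V E p S = (if S = {} then 0
      else (\<Sum>v\<in>S. real (deg_in V E v S) powr p) / real (card S))"

definition Mp :: "'a set \<Rightarrow> ('a \<Rightarrow> 'a \<Rightarrow> bool) \<Rightarrow> real \<Rightarrow> 'a set \<Rightarrow> real" where
  "Mp V E p S = fp V E p S powr (1 / p)"

definition peeling :: "'a set \<Rightarrow> ('a \<Rightarrow> 'a \<Rightarrow> bool) \<Rightarrow> (nat \<Rightarrow> 'a set) \<Rightarrow> bool" where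
  "peeling V E S \<longleftrightarrow> S 0 = V \<and>
     (\<forall>i\<in>{1..card V}. \<exists>l\<in>S (i - 1).
        deg_in V E l (S (i - 1)) = Min ((\<lambda>u. deg_in V E u (S (i - 1))) ` S (i - 1))
        \<and> S i = S (i - 1) - {l})"

end

theory Submission
  imports Defs
begin

text \<open>
  Let \<open>T\<close> maximize \<open>f\<^sub>p\<close> and let \<open>w\<close> be a vertex of minimum degree \<open>D\<close> in \<open>T\<close>. Since removing
  \<open>w\<close> does not increase \<open>f\<^sub>p\<close>, \<open>f\<^sub>p(T)\<close> is at most the loss of \<open>\<Sum>\<^sub>v d\<^sub>v(T)\<^sup>p\<close> caused by the
  removal. That loss is \<open>D\<^sup>p\<close> for \<open>w\<close> itself plus, by concavity of \<open>x\<^sup>p\<close>, at most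
  \<open>d\<^sup>p\<^sup>-\<^sup>1 \<le> D\<^sup>p\<^sup>-\<^sup>1\<close> for each of the \<open>D\<close> neighbours of \<open>w\<close>; hence \<open>f\<^sub>p(T) \<le> 2D\<^sup>p\<close>.
  The first peeled vertex of \<open>T\<close> is removed from some \<open>S\<^sub>i \<supseteq> T\<close>, and it has degree at least
  \<open>D\<close> there while being of minimum degree in \<open>S\<^sub>i\<close>; so \<open>D\<^sup>p \<le> f\<^sub>p(S\<^sub>i) \<le> f\<^sub>p(S')\<close>.
\<close>

lemma powr_diff_pred_le:
  fixes m :: nat and p :: real
  assumes "1 \<le> m" "p \<le> 1"
  shows "real m powr p - real (m - 1) powr p \<le> real m powr (p - 1)"
proof (cases "m = 1")
  case False
  then have m2: "2 \<le> m" using assms by auto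
  have "real (m - 1) * real m powr (p - 1) \<le> real (m - 1) * real (m - 1) powr (p - 1)"
    using m2 assms by (intro mult_left_mono powr_mono2') auto
  moreover have "real m powr p = real m * real m powr (p - 1)"
    and "real (m - 1) powr p = real (m - 1) * real (m - 1) powr (p - 1)"
    by (simp_all add: powr_mult_base)
  ultimately show ?thesis using m2 by (simp add: of_nat_diff algebra_simps)
qed simp

lemma peeling_step:
  assumes "peeling V E S" "i < card V"
  obtains l where "l \<in> S i"
    "deg_in V E l (S i) = Min ((\<lambda>u. deg_in V E u (S i)) ` S i)"
    "S (Suc i) = S i - {l}"
  using assms unfolding peeling_def
  by (metis atLeastAtMost_iff diff_Suc_1 less_eq_Suc_le plus_1_eq_Suc le_add1 Suc_leI)

lemma peeling_subset_card:
  assumes "peeling V E S" "finite V" "i \<le> card V"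
  shows "S i \<subseteq> V \<and> card (S i) = card V - i"
  using assms(3)
proof (induction i)
  case 0
  then show ?case using assms(1) by (simp add: peeling_def)
next
  case (Suc i)
  have IH: "S i \<subseteq> V" "card (S i) = card V - i" using Suc.IH Suc.prems by auto
  obtain l where "l \<in> S i" "S (Suc i) = S i - {l}"
    using peeling_step[OF assms(1)] Suc.prems by (metis Suc_le_lessD)
  moreover have "finite (S i)" using IH assms(2) finite_subset by blast
  ultimately show ?case using IH by auto
qed

lemma peeling_last_empty:
  assumes "peeling V E S" "finite V"
  shows "S (card V) = {}"
  using peeling_subset_card[OF assms order.refl] assms(2)
  by (metis card_0_eq diff_self_eq_0 finite_subset)

text \<open>The first vertex of \<open>T\<close> to be peeled sees all of \<open>T\<close> at that moment.\<close>

lemma peeling_min_degree_bound: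
  assumes "peeling V E S" "finite V" "T \<subseteq> V" "T \<noteq> {}"
    and min: "\<forall>u\<in>T. D \<le> deg_in V E u T"
  obtains i where "i < card V" "T \<subseteq> S i" "\<forall>u\<in>S i. D \<le> deg_in V E u (S i)"
proof -
  have ex: "\<not> T \<subseteq> S (card V)" using peeling_last_empty[OF assms(1,2)] assms(4) by blast
  define j where "j = (LEAST j. \<not> T \<subseteq> S j)"
  have "\<not> T \<subseteq> S j" "j \<le> card V"
    unfolding j_def using ex by (fact LeastI, fact Least_le)
  moreover have "j \<noteq> 0" using \<open>\<not> T \<subseteq> S j\<close> assms(1,3) by (auto simp: peeling_def)
  ultimately obtain i where j: "j = Suc i" "i < card V" "\<not> T \<subseteq> S (Suc i)"
    by (metis Suc_le_lessD not0_implies_Suc)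
  have Ti: "T \<subseteq> S i" using not_less_Least[of i "\<lambda>j. \<not> T \<subseteq> S j"] j(1) unfolding j_def by auto
  obtain l where l: "l \<in> S i" "deg_in V E l (S i) = Min ((\<lambda>u. deg_in V E u (S i)) ` S i)"
      "S (Suc i) = S i - {l}"
    using peeling_step[OF assms(1) j(2)] .
  have fin: "finite (S i)"
    using peeling_subset_card[OF assms(1,2)] j(2) assms(2) finite_subset by (metis less_imp_le)
  have "l \<in> T" using l(3) Ti j(3) by blast
  have "D \<le> deg_in V E u (S i)" if "u \<in> S i" for u
  proof -
    have "D \<le> deg_in V E l T" using min \<open>l \<in> T\<close> by blast
    also have "\<dots> \<le> deg_in V E l (S i)"
      unfolding deg_in_def using Ti fin by (intro card_mono) auto
    also have "\<dots> \<le> deg_in V E u (S i)" using l(2) that fin by simp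
    finally show ?thesis .
  qed
  then show ?thesis using that j(2) Ti by blast
qed

definition deg_powr_sum :: "'a set \<Rightarrow> ('a \<Rightarrow> 'a \<Rightarrow> bool) \<Rightarrow> real \<Rightarrow> 'a set \<Rightarrow> real" where
  "deg_powr_sum V E p S = (\<Sum>v\<in>S. real (deg_in V E v S) powr p)"

lemma fp_nonneg: "0 \<le> fp V E p S"
  unfolding fp_def by (auto intro!: sum_nonneg divide_nonneg_nonneg)

lemma fp_singleton:
  assumes "simple_graph V E"
  shows "fp V E p {w} = 0"
proof -
  have "nbhd V E w \<inter> {w} = {}" using assms unfolding simple_graph_def nbhd_def by blast
  then show ?thesis unfolding fp_def deg_in_def by simp
qed

lemma min_degree_powr_le_fp:
  assumes "finite S" "S \<noteq> {}" "\<forall>u\<in>S. D \<le> deg_in V E u S" "0 < p"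
  shows "real D powr p \<le> fp V E p S"
proof -
  have "(\<Sum>u\<in>S. real D powr p) \<le> (\<Sum>u\<in>S. real (deg_in V E u S) powr p)"
    using assms by (intro sum_mono powr_mono2) auto
  then have "real (card S) * real D powr p \<le> (\<Sum>u\<in>S. real (deg_in V E u S) powr p)"
    by simp
  moreover have "0 < real (card S)" using assms(1,2) by (simp add: card_gt_0_iff)
  ultimately show ?thesis using assms(2) unfolding fp_def by (simp add: pos_le_divide_eq mult.commute)
qed

lemma fp_le_deg_powr_sum_loss:
  assumes "finite T" "w \<in> T" "T - {w} \<noteq> {}" "fp V E p (T - {w}) \<le> fp V E p T"
  shows "fp V E p T \<le> deg_powr_sum V E p T - deg_powr_sum V E p (T - {w})"
proof -
  define A B n where "A = deg_powr_sum V E p T" and "B = deg_powr_sum V E p (T - {w})"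
    and "n = real (card T)"
  have "0 < card (T - {w})" using assms(1,3) by (simp add: card_gt_0_iff)
  then have n: "1 < n" "real (card (T - {w})) = n - 1"
    using assms(1,2) unfolding n_def by (auto simp: of_nat_diff)
  have "fp V E p T = A / n" "fp V E p (T - {w}) = B / (n - 1)"
    using assms(2,3) n(2) unfolding fp_def deg_powr_sum_def A_def B_def n_def by auto
  then have "B / (n - 1) \<le> A / n" using assms(4) by simp
  then have "A / n \<le> A - B" using n(1) by (simp add: field_simps)
  then show ?thesis using \<open>fp V E p T = A / n\<close> unfolding A_def B_def by simp
qed

lemma deg_in_remove_neighbour:
  assumes "finite T" "w \<in> T" "w \<in> nbhd V E u"
  shows "deg_in V E u (T - {w}) = deg_in V E u T - 1"
proof -
  have "nbhd V E u \<inter> (T - {w}) = (nbhd V E u \<inter> T) - {w}" by blast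
  then show ?thesis unfolding deg_in_def using assms by simp
qed

lemma deg_powr_remove_le:
  assumes "simple_graph V E" "T \<subseteq> V" "w \<in> T" "u \<in> T - {w}" "p \<le> 1"
    and min: "\<forall>x\<in>T. deg_in V E w T \<le> deg_in V E x T"
  shows "real (deg_in V E u T) powr p - real (deg_in V E u (T - {w})) powr p
      \<le> (if w \<in> nbhd V E u then real (deg_in V E w T) powr (p - 1) else 0)"
proof (cases "w \<in> nbhd V E u")
  case False
  then have "nbhd V E u \<inter> (T - {w}) = nbhd V E u \<inter> T" by blast
  then show ?thesis using False unfolding deg_in_def by simp
next
  case True
  have fin: "finite T" using assms(1,2) finite_subset unfolding simple_graph_def by blast
  have "w \<in> nbhd V E u \<inter> T" "u \<in> nbhd V E w \<inter> T"
    using True assms(1-4) unfolding simple_graph_def nbhd_def by auto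
  then have pos: "1 \<le> deg_in V E u T" "1 \<le> deg_in V E w T"
    unfolding deg_in_def using fin by (auto simp: Suc_le_eq card_gt_0_iff)
  have "real (deg_in V E u T) powr p - real (deg_in V E u (T - {w})) powr p
      \<le> real (deg_in V E u T) powr (p - 1)"
    using powr_diff_pred_le[OF pos(1) assms(5)] deg_in_remove_neighbour[OF fin assms(3) True]
    by simp
  also have "\<dots> \<le> real (deg_in V E w T) powr (p - 1)"
    using min assms(4,5) pos by (intro powr_mono2') auto
  finally show ?thesis using True by simp
qed

lemma deg_powr_sum_loss_le:
  assumes "simple_graph V E" "T \<subseteq> V" "w \<in> T" "p \<le> 1"
    and min: "\<forall>x\<in>T. deg_in V E w T \<le> deg_in V E x T"
  shows "deg_powr_sum V E p T - deg_powr_sum V E p (T - {w})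
      \<le> 2 * real (deg_in V E w T) powr p"
proof -
  define D where "D = deg_in V E w T"
  define d where "d = (\<lambda>u X. real (deg_in V E u X) powr p)"
  have fin: "finite T" using assms(1,2) finite_subset unfolding simple_graph_def by blast
  have nbhd_w: "{u \<in> T - {w}. w \<in> nbhd V E u} = nbhd V E w \<inter> T"
    using assms(1-3) unfolding simple_graph_def nbhd_def by blast
  have "(\<Sum>u\<in>T - {w}. d u T - d u (T - {w}))
      \<le> (\<Sum>u\<in>T - {w}. if w \<in> nbhd V E u then real D powr (p - 1) else 0)"
    unfolding d_def D_def by (intro sum_mono deg_powr_remove_le[OF assms(1-3) _ assms(4) min])
  also have "\<dots> = (\<Sum>u\<in>{u \<in> T - {w}. w \<in> nbhd V E u}. real D powr (p - 1))"
    using fin by (subst sum.inter_filter) auto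
  also have "\<dots> = real D * real D powr (p - 1)"
    unfolding nbhd_w by (simp add: D_def deg_in_def Int_commute)
  also have "\<dots> = real D powr p"
    by (cases "D = 0") (simp_all add: powr_mult_base)
  finally have "(\<Sum>u\<in>T - {w}. d u T - d u (T - {w})) \<le> real D powr p" .
  moreover have "deg_powr_sum V E p T - deg_powr_sum V E p (T - {w})
      = d w T + (\<Sum>u\<in>T - {w}. d u T - d u (T - {w}))"
    using fin assms(3) unfolding deg_powr_sum_def d_def by (simp add: sum.remove sum_subtractf)
  ultimately show ?thesis unfolding d_def D_def by simp
qed

lemma fp_le_twice_min_degree_powr:
  assumes "simple_graph V E" "T \<subseteq> V" "w \<in> T" "p \<le> 1"
    and min: "\<forall>x\<in>T. deg_in V E w T \<le> deg_in V E x T"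
    and stable: "fp V E p (T - {w}) \<le> fp V E p T"
  shows "fp V E p T \<le> 2 * real (deg_in V E w T) powr p"
proof (cases "T = {w}")
  case True
  then show ?thesis using fp_singleton[OF assms(1)] by simp
next
  case False
  have "finite T" using assms(1,2) finite_subset unfolding simple_graph_def by blast
  then show ?thesis
    using fp_le_deg_powr_sum_loss[of T w V E p] deg_powr_sum_loss_le[OF assms(1-5)]
      False assms(3) stable by fastforce
qed

lemma fp_le_twice_best_peeling:
  assumes G: "simple_graph V E" and p: "0 < p" "p \<le> 1" and S: "peeling V E S"
    and best: "\<forall>j\<le>card V. fp V E p (S j) \<le> fp V E p (S k)"
    and "T \<subseteq> V"
  shows "fp V E p T \<le> 2 * fp V E p (S k)"
proof -
  have finV: "finite V" using G unfolding simple_graph_def by blast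
  have "Max (fp V E p ` Pow V) \<in> fp V E p ` Pow V" using finV by (intro Max_in) auto
  then obtain T0 where T0: "T0 \<subseteq> V" "fp V E p T0 = Max (fp V E p ` Pow V)" by auto
  have max: "fp V E p X \<le> fp V E p T0" if "X \<subseteq> V" for X
    unfolding T0(2) using finV that by (simp add: Max_ge)
  have "fp V E p T0 \<le> 2 * fp V E p (S k)"
  proof (cases "T0 = {}")
    case True
    then show ?thesis using fp_nonneg[of V E p "S k"] by (simp add: fp_def)
  next
    case False
    obtain w where w: "w \<in> T0" "\<forall>x\<in>T0. deg_in V E w T0 \<le> deg_in V E x T0"
      using ex_has_least_nat[of "\<lambda>u. u \<in> T0" _ "\<lambda>u. deg_in V E u T0"] False by blast
    obtain i where i: "i < card V" "T0 \<subseteq> S i" "\<forall>u\<in>S i. deg_in V E w T0 \<le> deg_in V E u (S i)"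
      using peeling_min_degree_bound[OF S finV T0(1) False w(2)] .
    have "finite (S i)" using peeling_subset_card[OF S finV] i(1) finV finite_subset
      by (metis less_imp_le)
    have "fp V E p T0 \<le> 2 * real (deg_in V E w T0) powr p"
      using fp_le_twice_min_degree_powr[OF G T0(1) w(1) p(2) w(2)] max T0(1) by blast
    also have "\<dots> \<le> 2 * fp V E p (S i)"
      using min_degree_powr_le_fp[OF \<open>finite (S i)\<close> _ i(3) p(1)] i(2) w(1) by auto
    also have "\<dots> \<le> 2 * fp V E p (S k)" using best i(1) by simp
    finally show ?thesis .
  qed
  then show ?thesis using max[OF \<open>T \<subseteq> V\<close>] by simp
qed

lemma Mp_le_scaled:
  assumes "fp V E p T \<le> c * fp V E p S" "0 < p" "0 \<le> c"
  shows "Mp V E p T \<le> c powr (1 / p) * Mp V E p S"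
proof -
  have "Mp V E p T \<le> (c * fp V E p S) powr (1 / p)"
    unfolding Mp_def using assms fp_nonneg by (intro powr_mono2) auto
  also have "\<dots> = c powr (1 / p) * Mp V E p S"
    unfolding Mp_def using assms(3) fp_nonneg by (simp add: powr_mult)
  finally show ?thesis .
qed

theorem lemma5:
  fixes V :: "'a set" and E :: "'a \<Rightarrow> 'a \<Rightarrow> bool" and p :: real
    and S :: "nat \<Rightarrow> 'a set" and k :: nat
  assumes "simple_graph V E"
    and "0 < p" and "p < 1"
    and "peeling V E S"
    and "k \<le> card V"
    and "\<forall>j\<le>card V. fp V E p (S j) \<le> fp V E p (S k)"
  shows "2 * fp V E p (S k) \<ge> Max (fp V E p ` Pow V)
     \<and> 2 powr (1 / p) * Mp V E p (S k) \<ge> Max (Mp V E p ` Pow V)"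
proof -
  have fin: "finite (Pow V)" using assms(1) unfolding simple_graph_def by simp
  have bound: "fp V E p T \<le> 2 * fp V E p (S k)" if "T \<subseteq> V" for T
    using fp_le_twice_best_peeling[OF assms(1,2) _ assms(4,6) that] assms(3) by simp
  have "Max (fp V E p ` Pow V) \<le> 2 * fp V E p (S k)"
    using bound fin by (intro Max.boundedI) auto
  moreover have "Max (Mp V E p ` Pow V) \<le> 2 powr (1 / p) * Mp V E p (S k)"
    using Mp_le_scaled[OF bound assms(2)] fin by (intro Max.boundedI) auto
  ultimately show ?thesis by simp
qed

end
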